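(* For every multiterminal source $X_{\mathcal M}$, $$R_{\mathrm{SK}}\ \ge\ R_{\mathrm{CI}}\ \ge\ \mathrm{CI}(X_{\mathcal M})-\mathbf I(X_{\mathcal M}).$$
   Context: Multiterminal source model. Let $\mathcal M=\{1,\dots,m\}$, $m\ge 2$. Let $X_{\mathcal M}=(X_1,\dots,X_m)$ be jointly distributed random variables on finite alphabets. For $A\subseteq\mathcal M$ write $X_A=(X_i:i\in A)$. For $n\in\mathbb N$, $X^n_{\mathcal M}$ consists of $n$ i.i.d. copies of $X_{\mathcal M}$, and $X_A^n=(X_i^n:i\in A)$. Logarithms are base 2. An interactive communication $\mathbf F$ (depending on $n$) is a finite sequence of transmissions; each transmission is sent by some terminal $i$ and is a deterministic function of $X_i^n$ and the previous transmissions. Its range is the finite set $\mathcal F$. A common randomness (CR) obtained from $\mathbf F$ is a sequence $\mathbf J=\mathbf J^{(n)}$ of functions of $X^n_{\mathcal M}$ such that for every $0<\epsilon<1$ and all sufficiently large $n$ there exist $J_i=J_i(X_i^n,\mathbf F)$, $i\in\mathcal M$, with $\Pr[J_1=\cdots=J_m=\mathbf J]\ge1-\epsilon$. A secret key (SK) obtained from $\mathbf F$ with rate $R$ is a CR $\mathbf K$ obtained from $\mathbf F$ such that for every $\epsilon>0$ and all large $n$, $I(\mathbf K;\mathbf F)\le\epsilon$ and $\frac1nH(\mathbf K)\ge R-\epsilon$. For a partition $\mathcal P$ of $\mathcal M$ with $|\mathcal P|\ge2$ let $\Delta(\mathcal P)=\frac{1}{|\mathcal P|-1}[\sum_{A\in\mathcal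 P}H(X_A)-H(X_{\mathcal M})]$, and let $\mathbf I(X_{\mathcal M})=\min_{\mathcal P}\Delta(\mathcal P)$. This quantity equals the SK capacity, i.e. the supremum of achievable SK rates. $R_{\mathrm{SK}}$ is the infimum of reals $R\ge0$ such that for every $\epsilon>0$ and all sufficiently large $n$ there exist an interactive communication $\mathbf F$ with $\frac1n\log|\mathcal F|\le R+\epsilon$ and an SK $\mathbf K$ obtained from $\mathbf F$ with $\frac1nH(\mathbf K)\ge\mathbf I(X_{\mathcal M})-\epsilon$. For a random variable $\mathbf L$, define $$\mathbf I(X^n_{\mathcal M}|\mathbf L)=\max_{\mathcal P^*}\frac{1}{|\mathcal P^*|-1}\Big[\sum_{A\in\mathcal P^*}H(X^n_A|\mathbf L)-H(X^n_{\mathcal M}|\mathbf L)\Big],$$ the maximum being over the partitions $\mathcal P^*$ minimizing $\Delta$. A Wyner common information ($\mathrm{CI}_W$) is a sequence of finite-valued functions $\mathbf L^{(n)}(X^n_{\mathcal M})$ with $\frac1n\mathbf I(X^n_{\mathcal M}|\mathbf L^{(n)})\to0$. An interactive common information (CI) is a $\mathrm{CI}_W$ of the form $(\mathbf J,\mathbf F)$, where $\mathbf F$ is an interactive communication and $\mathbf J$ is a CR obtained from $\mathbf F$. $R$ is an achievable CI rate if some CI $\mathbf L$ satisfies, for every $\epsilon>0$, $\frac1nH(\mathbf L)\le R+\epsilon$ for all large $n$; $\mathrm{CI}(X_{\mathcal M})$ is the infimum of achievable CI rates. $R_{\mathrm{CI}}$ is the infimum of reals $R\ge0$ such that for every $\epsilon>0$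 and all large $n$ there exist an interactive communication $\mathbf F$ with $\frac1n\log|\mathcal F|\le R+\epsilon$ and a CR $\mathbf J$ such that $(\mathbf J,\mathbf F)$ is a CI. *)

theory Defs
  imports "HOL-Probability.Probability" "HOL-Library.Disjoint_Sets"
begin

definition ent :: "'b pmf \<Rightarrow> real" where
  "ent q = (\<Sum>y\<in>set_pmf q. - pmf q y * log 2 (pmf q y))"

definition H :: "'s pmf \<Rightarrow> ('s \<Rightarrow> 'b) \<Rightarrow> real" where
  "H p f = ent (map_pmf f p)"

definition condH :: "'s pmf \<Rightarrow> ('s \<Rightarrow> 'b) \<Rightarrow> ('s \<Rightarrow> 'c) \<Rightarrow> real" where
  "condH p f g = H p (\<lambda>x. (f x, g x)) - H p g"

definition MI :: "'s pmf \<Rightarrow> ('s \<Rightarrow> 'b) \<Rightarrow> ('s \<Rightarrow> 'c) \<Rightarrow> real" where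
  "MI p f g = H p f + H p g - H p (\<lambda>x. (f x, g x))"

(* A source is a joint pmf P on 'i \<Rightarrow> 'a (terminals 'i, common finite alphabet 'a).
   X^n_M : n i.i.d. copies, realised as x :: nat \<Rightarrow> 'i \<Rightarrow> 'a with coordinates t < n. *)
definition iid :: "('i \<Rightarrow> 'a) pmf \<Rightarrow> nat \<Rightarrow> (nat \<Rightarrow> 'i \<Rightarrow> 'a) pmf" where
  "iid P n = Pi_pmf {..<n} undefined (\<lambda>_. P)"

definition obs :: "nat \<Rightarrow> 'i \<Rightarrow> (nat \<Rightarrow> 'i \<Rightarrow> 'a) \<Rightarrow> (nat \<Rightarrow> 'a)" where
  "obs n i x = (\<lambda>t. if t < n then x t i else undefined)"

(* an interactive communication: a finite sequence of transmissions, each given by the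
   sending terminal and a function of its observation and the previous transmissions *)
type_synonym ('i, 'a) protocol = "('i \<times> ((nat \<Rightarrow> 'a) \<Rightarrow> nat list \<Rightarrow> nat)) list"

fun run :: "('i, 'a) protocol \<Rightarrow> ('i \<Rightarrow> nat \<Rightarrow> 'a) \<Rightarrow> nat list \<Rightarrow> nat list" where
  "run [] y h = h"
| "run ((i, g) # ps) y h = run ps y (h @ [g (y i) h])"

definition transcript :: "nat \<Rightarrow> ('i, 'a) protocol \<Rightarrow> (nat \<Rightarrow> 'i \<Rightarrow> 'a) \<Rightarrow> nat list" where
  "transcript n \<pi> x = run \<pi> (\<lambda>i. obs n i x) []"

definition range_card :: "nat \<Rightarrow> ('i, 'a) protocol \<Rightarrow> nat" where
  "range_card n \<pi> = card (range (transcript n \<pi>))"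

definition is_CR :: "('i \<Rightarrow> 'a) pmf \<Rightarrow> (nat \<Rightarrow> ('i, 'a) protocol) \<Rightarrow> (nat \<Rightarrow> (nat \<Rightarrow> 'i \<Rightarrow> 'a) \<Rightarrow> nat) \<Rightarrow> bool" where
  "is_CR P comm J \<longleftrightarrow>
     (\<forall>\<epsilon>::real. 0 < \<epsilon> \<and> \<epsilon> < 1 \<longrightarrow>
        (\<forall>\<^sub>F n in sequentially. \<exists>Js :: 'i \<Rightarrow> (nat \<Rightarrow> 'a) \<Rightarrow> nat list \<Rightarrow> nat.
           measure_pmf.prob (iid P n)
             {x. \<forall>i. Js i (obs n i x) (transcript n (comm n) x) = J n x} \<ge> 1 - \<epsilon>))"

definition is_SK :: "('i \<Rightarrow> 'a) pmf \<Rightarrow> (nat \<Rightarrow> ('i, 'a) protocol) \<Rightarrow> (nat \<Rightarrow> (nat \<Rightarrow> 'i \<Rightarrow> 'a) \<Rightarrow> nat) \<Rightarrow> real \<Rightarrow> bool" where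
  "is_SK P comm K R \<longleftrightarrow> is_CR P comm K \<and>
     (\<forall>\<epsilon>::real. 0 < \<epsilon> \<longrightarrow>
        (\<forall>\<^sub>F n in sequentially.
           MI (iid P n) (K n) (transcript n (comm n)) \<le> \<epsilon> \<and>
           H (iid P n) (K n) / real n \<ge> R - \<epsilon>))"

definition parts :: "'i set set set" where
  "parts = {\<P>. partition_on UNIV \<P> \<and> card \<P> \<ge> 2}"

definition Delta :: "('i \<Rightarrow> 'a) pmf \<Rightarrow> 'i set set \<Rightarrow> real" where
  "Delta P \<P> = ((\<Sum>A\<in>\<P>. H P (\<lambda>x. restrict x A)) - H P id) / (real (card \<P>) - 1)"

definition SKcap :: "('i \<Rightarrow> 'a) pmf \<Rightarrow> real" where
  "SKcap P = Min (Delta P ` parts)"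

definition minparts :: "('i \<Rightarrow> 'a) pmf \<Rightarrow> 'i set set set" where
  "minparts P = {\<P> \<in> parts. Delta P \<P> = SKcap P}"

definition condI :: "('i \<Rightarrow> 'a) pmf \<Rightarrow> nat \<Rightarrow> ((nat \<Rightarrow> 'i \<Rightarrow> 'a) \<Rightarrow> 'l) \<Rightarrow> real" where
  "condI P n L = Max ((\<lambda>\<P>. ((\<Sum>A\<in>\<P>. condH (iid P n) (\<lambda>x t. restrict (x t) A) L)
                             - condH (iid P n) id L) / (real (card \<P>) - 1)) ` minparts P)"

definition is_CIW :: "('i \<Rightarrow> 'a) pmf \<Rightarrow> (nat \<Rightarrow> (nat \<Rightarrow> 'i \<Rightarrow> 'a) \<Rightarrow> 'l) \<Rightarrow> bool" where
  "is_CIW P L \<longleftrightarrow> (\<lambda>n. condI P n (L n) / real n) \<longlonglongrightarrow> 0"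

definition is_CI :: "('i \<Rightarrow> 'a) pmf \<Rightarrow> (nat \<Rightarrow> ('i, 'a) protocol) \<Rightarrow> (nat \<Rightarrow> (nat \<Rightarrow> 'i \<Rightarrow> 'a) \<Rightarrow> nat) \<Rightarrow> bool" where
  "is_CI P comm J \<longleftrightarrow> is_CR P comm J \<and>
     is_CIW P (\<lambda>n x. (J n x, transcript n (comm n) x))"

definition CIX :: "('i \<Rightarrow> 'a) pmf \<Rightarrow> ereal" where
  "CIX P = Inf (ereal ` {R. \<exists>comm J. is_CI P comm J \<and>
      (\<forall>\<epsilon>::real. 0 < \<epsilon> \<longrightarrow> (\<forall>\<^sub>F n in sequentially.
         H (iid P n) (\<lambda>x. (J n x, transcript n (comm n) x)) / real n \<le> R + \<epsilon>))})"

definition R_SK :: "('i \<Rightarrow> 'a) pmf \<Rightarrow> ereal" where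
  "R_SK P = Inf (ereal ` {R. R \<ge> 0 \<and> (\<exists>comm K. is_SK P comm K (SKcap P) \<and>
      (\<forall>\<epsilon>::real. 0 < \<epsilon> \<longrightarrow> (\<forall>\<^sub>F n in sequentially.
         log 2 (real (range_card n (comm n))) / real n \<le> R + \<epsilon>)))})"

definition R_CI :: "('i \<Rightarrow> 'a) pmf \<Rightarrow> ereal" where
  "R_CI P = Inf (ereal ` {R. R \<ge> 0 \<and> (\<exists>comm J. is_CI P comm J \<and>
      (\<forall>\<epsilon>::real. 0 < \<epsilon> \<longrightarrow> (\<forall>\<^sub>F n in sequentially.
         log 2 (real (range_card n (comm n))) / real n \<le> R + \<epsilon>)))})"

end

theory Submission
  imports Defs
begin

text \<open>Let \<open>J\<close> be common randomness obtained from the communication \<open>F\<close>, and let \<open>\<P>\<close> be a partition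
  attaining \<open>I(X\<^sub>M)\<close>.  Conditional subadditivity gives \<open>\<Delta>(\<P> | J, F) \<ge> 0\<close>.  On the other hand
  each block \<open>X\<^sup>n\<^sub>A\<close> recovers \<open>J\<close> from \<open>(X\<^sup>n\<^sub>A, F)\<close>, so by Fano's inequality conditioning on
  \<open>J\<close> costs only \<open>o(n)\<close> beyond conditioning on \<open>F\<close>; and interactive communication satisfies
  \<open>\<Sum>\<^sub>A H(F | X\<^sup>n\<^sub>A) \<le> (|\<P>| - 1) H(F)\<close>.  Together
  \<open>0 \<le> \<Delta>(\<P> | J, F) \<le> n I(X\<^sub>M) + H(F) - H(J, F) + o(n)\<close>.

  Hence \<open>H(J, F) \<le> n I(X\<^sub>M) + log |\<F>| + o(n)\<close>, i.e. \<open>CI(X\<^sub>M) \<le> R\<^sub>C\<^sub>I + I(X\<^sub>M)\<close>.  If \<open>J\<close> is a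
  secret key of rate \<open>I(X\<^sub>M)\<close> then \<open>H(J, F) \<approx> n I(X\<^sub>M) + H(F)\<close>, so the upper bound is \<open>o(n)\<close>
  for every minimizing partition: every secret key is an interactive common information, and
  \<open>R\<^sub>S\<^sub>K \<ge> R\<^sub>C\<^sub>I\<close>.\<close>

section \<open>Entropy of finitely supported distributions\<close>

definition expect :: "'s pmf \<Rightarrow> ('s \<Rightarrow> real) \<Rightarrow> real" where
  "expect p \<phi> = (\<Sum>x\<in>set_pmf p. pmf p x * \<phi> x)"

definition level_prob :: "'s pmf \<Rightarrow> ('s \<Rightarrow> 'b) \<Rightarrow> 's \<Rightarrow> real" where
  "level_prob p f x = pmf (map_pmf f p) (f x)"

lemma expect_map_pmf:
  assumes "finite (set_pmf p)"
  shows "expect (map_pmf f p) \<phi> = expect p (\<lambda>x. \<phi> (f x))"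
proof -
  have integral: "expect q \<psi> = measure_pmf.expectation q \<psi>" if "finite (set_pmf q)"
    for q :: "'c pmf" and \<psi>
    unfolding expect_def using that
    by (subst integral_measure_pmf_real[where A="set_pmf q"]) (auto simp: mult.commute)
  show ?thesis using assms by (simp add: integral)
qed

lemma expect_const: "finite (set_pmf p) \<Longrightarrow> expect p (\<lambda>_. c) = c"
  unfolding expect_def by (simp add: sum_distrib_right[symmetric] sum_pmf_eq_1)

lemma ent_eq_expect: "ent q = expect q (\<lambda>y. - log 2 (pmf q y))"
  unfolding ent_def expect_def by simp

lemma H_eq_expect: "finite (set_pmf p) \<Longrightarrow> H p f = expect p (\<lambda>x. - log 2 (level_prob p f x))"
  unfolding H_def ent_eq_expect level_prob_def by (simp add: expect_map_pmf)

lemma level_prob_pos: "x \<in> set_pmf p \<Longrightarrow> 0 < level_prob p f x"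
  unfolding level_prob_def by (intro pmf_positive) simp

lemma level_prob_mono:
  assumes "\<forall>y\<in>set_pmf p. g y = g x \<longrightarrow> f y = f x"
  shows "level_prob p g x \<le> level_prob p f x"
proof -
  have "level_prob p g x = measure p (g -` {g x} \<inter> set_pmf p)"
    unfolding level_prob_def pmf_map measure_Int_set_pmf ..
  also have "\<dots> \<le> measure p (f -` {f x} \<inter> set_pmf p)"
    using assms by (intro measure_pmf.finite_measure_mono) auto
  also have "\<dots> = level_prob p f x"
    unfolding level_prob_def pmf_map measure_Int_set_pmf ..
  finally show ?thesis .
qed

lemma H_le_of_determined:
  assumes "finite (set_pmf p)" "\<forall>x\<in>set_pmf p. \<forall>y\<in>set_pmf p. g x = g y \<longrightarrow> f x = f y"
  shows "H p f \<le> H p g"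
  unfolding H_eq_expect[OF assms(1)] expect_def
proof (rule sum_mono)
  fix x assume x: "x \<in> set_pmf p"
  have "level_prob p g x \<le> level_prob p f x"
    using assms(2) x by (intro level_prob_mono) blast
  hence "log 2 (level_prob p g x) \<le> log 2 (level_prob p f x)"
    using level_prob_pos[OF x, of g] level_prob_pos[OF x, of f] by simp
  thus "pmf p x * - log 2 (level_prob p f x) \<le> pmf p x * - log 2 (level_prob p g x)"
    by (intro mult_left_mono) simp_all
qed

lemma H_eq_of_determined:
  assumes "finite (set_pmf p)" "\<forall>x\<in>set_pmf p. \<forall>y\<in>set_pmf p. g x = g y \<longleftrightarrow> f x = f y"
  shows "H p f = H p g"
  using assms by (intro order_antisym H_le_of_determined) blast+

lemma H_const: "H p (\<lambda>_. c) = 0"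
  unfolding H_def ent_def by simp

lemma H_map_pmf: "H (map_pmf \<phi> q) f = H q (\<lambda>x. f (\<phi> x))"
  unfolding H_def by (simp add: pmf.map_comp o_def)

lemma H_return_pmf: "H (return_pmf c) f = 0"
  unfolding H_def ent_def by simp

lemma ent_le_cross_entropy:
  assumes fin: "finite (set_pmf q)" and pos: "\<forall>y\<in>set_pmf q. 0 < r y"
    and sum: "(\<Sum>y\<in>set_pmf q. r y) \<le> 1"
  shows "ent q \<le> expect q (\<lambda>y. - log 2 (r y))"
proof -
  have "ent q - expect q (\<lambda>y. - log 2 (r y)) = (\<Sum>y\<in>set_pmf q. pmf q y * log 2 (r y / pmf q y))"
    unfolding ent_eq_expect expect_def sum_subtractf[symmetric]
  proof (intro sum.cong refl)
    fix y assume y: "y \<in> set_pmf q"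
    have e: "log 2 (r y / pmf q y) = log 2 (r y) - log 2 (pmf q y)"
      using pos pmf_positive[OF y] y by (subst log_divide) auto
    show "pmf q y * - log 2 (pmf q y) - pmf q y * - log 2 (r y) = pmf q y * log 2 (r y / pmf q y)"
      by (subst e) (simp add: algebra_simps)
  qed
  also have "\<dots> \<le> (\<Sum>y\<in>set_pmf q. pmf q y * ((r y / pmf q y - 1) / ln 2))"
  proof (intro sum_mono mult_left_mono)
    fix y assume y: "y \<in> set_pmf q"
    hence "0 < r y / pmf q y" using pos pmf_positive[OF y] by simp
    hence "ln (r y / pmf q y) \<le> r y / pmf q y - 1" by (rule ln_le_minus_one)
    thus "log 2 (r y / pmf q y) \<le> (r y / pmf q y - 1) / ln 2"
      unfolding log_def by (simp add: divide_right_mono)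
  qed simp
  also have "\<dots> = ((\<Sum>y\<in>set_pmf q. r y) - (\<Sum>y\<in>set_pmf q. pmf q y)) / ln 2"
    unfolding sum_subtractf[symmetric] sum_divide_distrib
    by (intro sum.cong refl) (simp add: field_simps pmf_positive[THEN less_imp_neq, symmetric])
  also have "\<dots> \<le> 0"
    using sum fin by (simp add: divide_nonpos_pos sum_pmf_eq_1)
  finally show ?thesis by linarith
qed

lemma ent_le_log_card:
  assumes fin: "finite (set_pmf q)"
  shows "ent q \<le> log 2 (card (set_pmf q))"
proof -
  have c: "0 < card (set_pmf q)" using fin set_pmf_not_empty by (simp add: card_gt_0_iff)
  have "ent q \<le> expect q (\<lambda>y. - log 2 (1 / real (card (set_pmf q))))"
    by (rule ent_le_cross_entropy[OF fin]) (use c in auto)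
  also have "\<dots> = log 2 (card (set_pmf q))"
    using c by (simp add: expect_const[OF fin] log_divide)
  finally show ?thesis .
qed

lemma H_le_log_card:
  assumes fin: "finite (set_pmf p)" and "finite B" "f ` set_pmf p \<subseteq> B"
  shows "H p f \<le> log 2 (card B)"
proof -
  have "H p f \<le> log 2 (card (set_pmf (map_pmf f p)))"
    unfolding H_def using fin by (intro ent_le_log_card) simp
  also have "\<dots> \<le> log 2 (card B)"
  proof -
    have "0 < card (set_pmf (map_pmf f p))" using fin by (simp add: card_gt_0_iff set_pmf_not_empty)
    moreover have "card (set_pmf (map_pmf f p)) \<le> card B" using assms by (intro card_mono) auto
    ultimately show ?thesis by simp
  qed
  finally show ?thesis .
qed

lemma H_bool_le_1:
  fixes E :: "_ \<Rightarrow> bool"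
  shows "finite (set_pmf p) \<Longrightarrow> H p E \<le> 1"
  using H_le_log_card[of p UNIV E] by simp

lemma ent_pair_pmf:
  assumes "finite (set_pmf p)" "finite (set_pmf q)"
  shows "ent (pair_pmf p q) = ent p + ent q"
proof -
  have sp: "(\<Sum>a\<in>set_pmf p. pmf p a) = 1" "(\<Sum>b\<in>set_pmf q. pmf q b) = 1"
    using assms by (auto intro: sum_pmf_eq_1)
  have "ent (pair_pmf p q) = (\<Sum>a\<in>set_pmf p. \<Sum>b\<in>set_pmf q.
          - (pmf p a * pmf q b) * log 2 (pmf p a * pmf q b))"
    unfolding ent_def by (simp add: sum.cartesian_product) (rule sum.cong, auto simp: pmf_pair)
  also have "\<dots> = (\<Sum>a\<in>set_pmf p. \<Sum>b\<in>set_pmf q.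
          pmf q b * (- pmf p a * log 2 (pmf p a)) + pmf p a * (- pmf q b * log 2 (pmf q b)))"
    by (intro sum.cong refl) (simp add: log_mult pmf_positive algebra_simps)
  also have "\<dots> = (\<Sum>a\<in>set_pmf p. - pmf p a * log 2 (pmf p a) + pmf p a * ent q)"
    unfolding sum.distrib sum_distrib_left[symmetric] sum_distrib_right[symmetric] sp ent_def
    by simp
  also have "\<dots> = ent p + ent q"
    unfolding sum.distrib sum_distrib_right[symmetric] sp ent_def by simp
  finally show ?thesis .
qed

lemma H_pair_pmf:
  assumes "finite (set_pmf p)" "finite (set_pmf q)"
  shows "H (pair_pmf p q) (\<lambda>(y,z). (\<alpha> y, \<beta> z)) = H p \<alpha> + H q \<beta>"
  unfolding H_def map_pair using assms by (intro ent_pair_pmf) auto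

lemma pmf_map_snd_eq_sum:
  assumes "finite A" "fst ` set_pmf M \<subseteq> A"
  shows "pmf (map_pmf snd M) b = (\<Sum>a\<in>A. pmf M (a, b))"
proof -
  have "pmf (map_pmf snd M) b = measure M (A \<times> {b})"
    unfolding pmf_map using assms(2)
    by (intro measure_prob_cong_0) (force simp: set_pmf_iff[symmetric])+
  also have "\<dots> = sum (pmf M) ((\<lambda>a. (a, b)) ` A)"
    using assms(1) by (subst measure_measure_pmf_finite) (auto intro: sum.cong)
  also have "\<dots> = (\<Sum>a\<in>A. pmf M (a, b))"
    by (simp add: sum.reindex inj_on_def)
  finally show ?thesis .
qed

lemma pmf_map_fst_eq_sum:
  assumes "finite B" "snd ` set_pmf M \<subseteq> B"
  shows "pmf (map_pmf fst M) a = (\<Sum>b\<in>B. pmf M (a, b))"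
proof -
  have "pmf (map_pmf fst M) a = measure M ({a} \<times> B)"
    unfolding pmf_map using assms(2)
    by (intro measure_prob_cong_0) (force simp: set_pmf_iff[symmetric])+
  also have "\<dots> = sum (pmf M) ((\<lambda>b. (a, b)) ` B)"
    using assms(1) by (subst measure_measure_pmf_finite) (auto intro: sum.cong)
  also have "\<dots> = (\<Sum>b\<in>B. pmf M (a, b))"
    by (simp add: sum.reindex inj_on_def)
  finally show ?thesis .
qed

lemma sum_chain_weight_le_1:
  fixes f :: "'s \<Rightarrow> 'a" and g :: "'s \<Rightarrow> 'b" and h :: "'s \<Rightarrow> 'c"
  assumes fin: "finite (set_pmf p)"
  defines "Mfg \<equiv> map_pmf (\<lambda>x. (f x, g x)) p" and "Mgh \<equiv> map_pmf (\<lambda>x. (g x, h x)) p"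
    and "Mg \<equiv> map_pmf g p"
  shows "(\<Sum>(a,b,c)\<in>(\<lambda>x. (f x, g x, h x)) ` set_pmf p. pmf Mfg (a,b) * pmf Mgh (b,c) / pmf Mg b) \<le> 1"
proof -
  define S where "S = set_pmf p"
  define r where "r = (\<lambda>(a,b,c). pmf Mfg (a,b) * pmf Mgh (b,c) / pmf Mg b)"
  have finS: "finite S" using fin S_def by simp
  have "(\<Sum>y\<in>(\<lambda>x. (f x, g x, h x)) ` S. r y) \<le> (\<Sum>y\<in>f ` S \<times> (g ` S \<times> h ` S). r y)"
    using finS by (intro sum_mono2) (auto simp: r_def case_prod_beta)
  also have "\<dots> = (\<Sum>a\<in>f ` S. \<Sum>b\<in>g ` S. \<Sum>c\<in>h ` S. r (a,b,c))"
    by (simp add: sum.cartesian_product)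
  also have "\<dots> = (\<Sum>b\<in>g ` S. \<Sum>a\<in>f ` S. \<Sum>c\<in>h ` S. r (a,b,c))"
    by (rule sum.swap)
  also have "\<dots> = (\<Sum>b\<in>g ` S. (\<Sum>a\<in>f ` S. pmf Mfg (a,b)) * (\<Sum>c\<in>h ` S. pmf Mgh (b,c)) / pmf Mg b)"
    unfolding r_def
    by (simp add: sum_distrib_left sum_distrib_right sum_divide_distrib)
       (rule sum.cong[OF refl], rule sum.swap)
  also have "\<dots> = (\<Sum>b\<in>g ` S. pmf Mg b)"
  proof (rule sum.cong[OF refl])
    fix b assume b: "b \<in> g ` S"
    have "Mg = map_pmf snd Mfg" unfolding Mg_def Mfg_def by (simp add: pmf.map_comp o_def)
    hence fg: "(\<Sum>a\<in>f ` S. pmf Mfg (a,b)) = pmf Mg b"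
      using finS unfolding S_def Mfg_def
      by (simp add: pmf_map_snd_eq_sum[where A="f ` set_pmf p"] image_image)
    have "Mg = map_pmf fst Mgh" unfolding Mg_def Mgh_def by (simp add: pmf.map_comp o_def)
    hence gh: "(\<Sum>c\<in>h ` S. pmf Mgh (b,c)) = pmf Mg b"
      using finS unfolding S_def Mgh_def
      by (simp add: pmf_map_fst_eq_sum[where B="h ` set_pmf p"] image_image)
    have "0 < pmf Mg b" using b unfolding Mg_def S_def by (auto intro!: pmf_positive)
    thus "(\<Sum>a\<in>f ` S. pmf Mfg (a,b)) * (\<Sum>c\<in>h ` S. pmf Mgh (b,c)) / pmf Mg b = pmf Mg b"
      unfolding fg gh by simp
  qed
  also have "\<dots> = 1" using finS unfolding Mg_def S_def by (intro sum_pmf_eq_1) auto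
  finally show ?thesis unfolding r_def S_def .
qed

lemma H_submodular:
  assumes fin: "finite (set_pmf p)"
  shows "H p (\<lambda>x. (f x, g x, h x)) + H p g \<le> H p (\<lambda>x. (f x, g x)) + H p (\<lambda>x. (g x, h x))"
proof -
  define t where "t = (\<lambda>x. (f x, g x, h x))"
  define r where "r = (\<lambda>(a,b,c). pmf (map_pmf (\<lambda>x. (f x, g x)) p) (a,b)
                         * pmf (map_pmf (\<lambda>x. (g x, h x)) p) (b,c) / pmf (map_pmf g p) b)"
  have rt: "r (t x) = level_prob p (\<lambda>x. (f x, g x)) x * level_prob p (\<lambda>x. (g x, h x)) x
                     / level_prob p g x" for x
    unfolding r_def t_def level_prob_def by simp
  have "H p t = ent (map_pmf t p)" unfolding H_def ..
  also have "\<dots> \<le> expect (map_pmf t p) (\<lambda>y. - log 2 (r y))"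
  proof (rule ent_le_cross_entropy)
    show "\<forall>y\<in>set_pmf (map_pmf t p). 0 < r y"
      using rt by (auto intro!: mult_pos_pos divide_pos_pos level_prob_pos)
    show "(\<Sum>y\<in>set_pmf (map_pmf t p). r y) \<le> 1"
      using sum_chain_weight_le_1[OF fin, of f g h] unfolding r_def t_def by simp
  qed (simp add: fin)
  also have "\<dots> = expect p (\<lambda>x. - log 2 (r (t x)))" by (rule expect_map_pmf[OF fin])
  also have "\<dots> = H p (\<lambda>x. (f x, g x)) + H p (\<lambda>x. (g x, h x)) - H p g"
    unfolding H_eq_expect[OF fin] expect_def sum.distrib[symmetric] sum_subtractf[symmetric]
  proof (rule sum.cong[OF refl])
    fix x assume x: "x \<in> set_pmf p"
    have "0 < level_prob p (\<lambda>x. (f x, g x)) x" "0 < level_prob p (\<lambda>x. (g x, h x)) x"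
      "0 < level_prob p g x"
      using x by (auto intro: level_prob_pos)
    thus "pmf p x * - log 2 (r (t x)) = pmf p x * - log 2 (level_prob p (\<lambda>x. (f x, g x)) x)
        + pmf p x * - log 2 (level_prob p (\<lambda>x. (g x, h x)) x) - pmf p x * - log 2 (level_prob p g x)"
      unfolding rt by (simp add: log_mult log_divide algebra_simps)
  qed
  finally show ?thesis unfolding t_def by simp
qed

lemma H_pair_le:
  assumes fin: "finite (set_pmf p)"
  shows "H p (\<lambda>x. (f x, h x)) \<le> H p f + H p h"
proof -
  have "H p (\<lambda>x. (f x, (), h x)) + H p (\<lambda>x. ()) \<le> H p (\<lambda>x. (f x, ())) + H p (\<lambda>x. ((), h x))"
    by (rule H_submodular[OF fin])
  moreover have "H p (\<lambda>x. (f x, (), h x)) = H p (\<lambda>x. (f x, h x))"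
    "H p (\<lambda>x. (f x, ())) = H p f" "H p (\<lambda>x. ((), h x)) = H p h"
    by (rule H_eq_of_determined[OF fin]; auto)+
  ultimately show ?thesis by (simp add: H_const)
qed

lemma condH_le_of_determined:
  assumes "finite (set_pmf p)" "\<forall>x\<in>set_pmf p. \<forall>y\<in>set_pmf p. g x = g y \<longrightarrow> f x = f y"
  shows "condH p f L \<le> condH p g L"
proof -
  have "H p (\<lambda>x. (f x, L x)) \<le> H p (\<lambda>x. (g x, L x))"
    using assms(2) by (intro H_le_of_determined[OF assms(1)]) blast
  thus ?thesis unfolding condH_def by simp
qed

lemma condH_pair_le:
  assumes fin: "finite (set_pmf p)"
  shows "condH p (\<lambda>x. (f x, g x)) L \<le> condH p f L + condH p g L"
proof -
  have "H p (\<lambda>x. (f x, L x, g x)) + H p L \<le> H p (\<lambda>x. (f x, L x)) + H p (\<lambda>x. (L x, g x))"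
    by (rule H_submodular[OF fin])
  moreover have "H p (\<lambda>x. ((f x, g x), L x)) = H p (\<lambda>x. (f x, L x, g x))"
    "H p (\<lambda>x. (g x, L x)) = H p (\<lambda>x. (L x, g x))"
    by (rule H_eq_of_determined[OF fin]; auto)+
  ultimately show ?thesis unfolding condH_def by linarith
qed

lemma condH_subadditive:
  assumes fin: "finite (set_pmf p)" and "finite B"
    and det: "\<forall>x\<in>set_pmf p. \<forall>y\<in>set_pmf p. (\<forall>A\<in>B. Z A x = Z A y) \<longrightarrow> W x = W y"
  shows "condH p W L \<le> (\<Sum>A\<in>B. condH p (Z A) L)"
proof -
  have "condH p W L \<le> condH p (\<lambda>x. restrict (\<lambda>A. Z A x) B) L"
  proof (intro condH_le_of_determined[OF fin] ballI impI)
    fix x y assume xy: "x \<in> set_pmf p" "y \<in> set_pmf p"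
      and eq: "restrict (\<lambda>A. Z A x) B = restrict (\<lambda>A. Z A y) B"
    have "\<forall>A\<in>B. Z A x = Z A y"
      using eq by (simp add: restrict_def fun_eq_iff) meson
    thus "W x = W y" using det xy by blast
  qed
  also have "\<dots> \<le> (\<Sum>A\<in>B. condH p (Z A) L)"
    using \<open>finite B\<close>
  proof (induction B rule: finite_induct)
    case empty
    have "H p (\<lambda>x. (restrict (\<lambda>A. Z A x) {}, L x)) = H p L"
      by (rule H_eq_of_determined[OF fin]) (simp add: restrict_def)
    thus ?case unfolding condH_def by simp
  next
    case (insert A B)
    have "condH p (\<lambda>x. restrict (\<lambda>A. Z A x) (insert A B)) L
        \<le> condH p (\<lambda>x. (Z A x, restrict (\<lambda>A. Z A x) B)) L"
    proof (intro condH_le_of_determined[OF fin] ballI impI ext)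
      fix x y C assume "(Z A x, restrict (\<lambda>A. Z A x) B) = (Z A y, restrict (\<lambda>A. Z A y) B)"
      hence "Z A x = Z A y" "restrict (\<lambda>A. Z A x) B C = restrict (\<lambda>A. Z A y) B C" by simp_all
      thus "restrict (\<lambda>A. Z A x) (insert A B) C = restrict (\<lambda>A. Z A y) (insert A B) C"
        by (cases "C = A") (simp_all add: restrict_def)
    qed
    also have "\<dots> \<le> condH p (Z A) L + condH p (\<lambda>x. restrict (\<lambda>A. Z A x) B) L"
      by (rule condH_pair_le[OF fin])
    finally show ?case using insert.IH unfolding sum.insert[OF insert.hyps] by linarith
  qed
  finally show ?thesis .
qed

text \<open>Gibbs' inequality with the weight \<open>1/2\<close> on \<open>None\<close> and \<open>1/(2N)\<close> on each value.\<close>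

lemma H_partial_record_le:
  fixes p :: "'s pmf" and J :: "'s \<Rightarrow> 'b"
  assumes fin: "finite (set_pmf p)" and N: "card (J ` set_pmf p) \<le> N" "1 \<le> N"
  shows "H p (\<lambda>x. if E x then Some (J x) else None) \<le> 1 + log 2 (2 * real N) * measure p {x. E x}"
proof -
  define J' where "J' = (\<lambda>x. if E x then Some (J x) else None)"
  define q where "q = map_pmf J' p"
  define r :: "'b option \<Rightarrow> real" where "r = (\<lambda>v. case v of None \<Rightarrow> 1/2 | Some _ \<Rightarrow> 1 / (2 * real N))"
  define L where "L = log 2 (2 * real N)"
  have "(\<Sum>y\<in>set_pmf q. r y) \<le> (\<Sum>y\<in>insert None (Some ` (J ` set_pmf p)). r y)"
    using fin unfolding q_def J'_def by (intro sum_mono2) (auto simp: r_def split: option.splits)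
  also have "\<dots> = 1/2 + (\<Sum>y\<in>Some ` (J ` set_pmf p). r y)"
    using fin by (subst sum.insert) (auto simp: r_def)
  also have "(\<Sum>y\<in>Some ` (J ` set_pmf p). r y) = real (card (J ` set_pmf p)) * (1 / (2 * real N))"
    by (subst sum.reindex) (auto simp: r_def)
  also have "\<dots> \<le> real N * (1 / (2 * real N))"
    using N by (intro mult_right_mono) auto
  also have "\<dots> = 1/2" using N(2) by simp
  finally have rsum: "(\<Sum>y\<in>set_pmf q. r y) \<le> 1" by simp
  have "H p J' = ent q" unfolding H_def q_def ..
  also have "\<dots> \<le> expect q (\<lambda>y. - log 2 (r y))"
    using fin rsum N(2) unfolding q_def
    by (intro ent_le_cross_entropy) (auto simp: r_def split: option.splits)
  also have "\<dots> = expect p (\<lambda>x. - log 2 (r (J' x)))" unfolding q_def by (rule expect_map_pmf[OF fin])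
  also have "\<dots> \<le> expect p (\<lambda>x. 1 + (if E x then L else 0))"
    unfolding expect_def using N(2)
    by (intro sum_mono mult_left_mono) (auto simp: J'_def r_def L_def log_divide)
  also have "\<dots> = 1 + L * measure p {x. E x}"
  proof -
    have "expect p (\<lambda>x. 1 + (if E x then L else 0))
        = (\<Sum>x\<in>set_pmf p. pmf p x) + L * sum (pmf p) {x\<in>set_pmf p. E x}"
      unfolding expect_def sum_distrib_left sum.distrib[symmetric] sum.inter_filter[OF fin]
      by (intro sum.cong refl) (auto simp: algebra_simps)
    also have "sum (pmf p) {x\<in>set_pmf p. E x} = measure p ({x. E x} \<inter> set_pmf p)"
      using fin by (simp add: measure_measure_pmf_finite Int_def conj_commute)
    finally show ?thesis using fin by (simp add: sum_pmf_eq_1 measure_Int_set_pmf)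
  qed
  finally show ?thesis unfolding J'_def L_def .
qed

lemma fano:
  assumes fin: "finite (set_pmf p)"
    and err: "measure p {x. J x \<noteq> \<phi> (Y x)} \<le> \<delta>"
    and N: "card (J ` set_pmf p) \<le> N" "1 \<le> N"
  shows "condH p J Y \<le> 2 + \<delta> * log 2 (2 * real N)"
proof -
  define E where "E = (\<lambda>x. J x \<noteq> \<phi> (Y x))"
  define J' where "J' = (\<lambda>x. if E x then Some (J x) else None)"
  have "H p (\<lambda>x. (J x, Y x)) \<le> H p (\<lambda>x. (J' x, (E x, Y x)))"
    by (rule H_le_of_determined[OF fin]) (auto simp: J'_def E_def split: if_splits)
  also have "\<dots> \<le> H p J' + (H p E + H p Y)"
    using H_pair_le[OF fin, of J' "\<lambda>x. (E x, Y x)"] H_pair_le[OF fin, of E Y] by linarith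
  finally have "condH p J Y \<le> H p J' + 1"
    unfolding condH_def using H_bool_le_1[OF fin, of E] by linarith
  moreover have "H p J' \<le> 1 + log 2 (2 * real N) * \<delta>"
  proof -
    have "0 \<le> log 2 (2 * real N)" using N(2) by simp
    thus ?thesis using H_partial_record_le[OF fin N, of E] err
      unfolding J'_def E_def by (meson add_left_mono mult_left_mono order_trans)
  qed
  ultimately show ?thesis by (simp add: mult.commute)
qed

section \<open>Blocks of the i.i.d. source and partitions\<close>

lemma set_pmf_iid: "set_pmf (iid P n) = PiE_dflt {..<n} undefined (\<lambda>_. set_pmf P)"
  unfolding iid_def by (simp add: set_Pi_pmf o_def)

lemma finite_set_pmf_iid:
  fixes P :: "('i::finite \<Rightarrow> 'a::finite) pmf"
  shows "finite (set_pmf (iid P n))"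
  unfolding set_pmf_iid by (intro finite_PiE_dflt) auto

lemma card_set_pmf_iid_le:
  fixes P :: "('i::finite \<Rightarrow> 'a::finite) pmf"
  shows "card (set_pmf (iid P n)) \<le> CARD('i \<Rightarrow> 'a) ^ n"
  unfolding set_pmf_iid by (subst card_PiE_dflt) (auto intro!: power_mono card_mono)

lemma iid_Suc: "iid P (Suc n) = map_pmf (\<lambda>(y,f). f(n:=y)) (pair_pmf P (iid P n))"
  unfolding iid_def lessThan_Suc by (rule Pi_pmf_insert) auto

definition block :: "'i set \<Rightarrow> (nat \<Rightarrow> 'i \<Rightarrow> 'a) \<Rightarrow> nat \<Rightarrow> 'i \<Rightarrow> 'a" where
  "block A x = (\<lambda>t. restrict (x t) A)"

lemma block_UNIV: "block UNIV = id"
  by (auto simp: block_def fun_eq_iff)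

lemma block_fun_upd_eq_iff:
  assumes "f n = undefined" "f' n = undefined"
  shows "block A (f(n := y)) = block A (f'(n := y')) \<longleftrightarrow>
         restrict y A = restrict y' A \<and> block A f = block A f'"
proof
  assume eq: "block A (f(n := y)) = block A (f'(n := y'))"
  have "restrict y A = restrict y' A" using fun_cong[OF eq, of n] by (simp add: block_def)
  moreover have "block A f = block A f'"
  proof
    fix t show "block A f t = block A f' t"
      using fun_cong[OF eq, of t] assms by (cases "t = n") (simp_all add: block_def)
  qed
  ultimately show "restrict y A = restrict y' A \<and> block A f = block A f'" ..
qed (auto simp: block_def fun_eq_iff)

lemma H_block_iid:
  fixes P :: "('i::finite \<Rightarrow> 'a::finite) pmf"
  shows "H (iid P n) (block A) = real n * H P (\<lambda>x. restrict x A)"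
proof (induction n)
  case 0
  show ?case unfolding iid_def by (simp add: H_return_pmf)
next
  case (Suc n)
  let ?q = "pair_pmf P (iid P n)"
  have "H (iid P (Suc n)) (block A) = H ?q (\<lambda>(y,f). block A (f(n:=y)))"
    unfolding iid_Suc H_map_pmf by (simp add: case_prod_unfold)
  also have "\<dots> = H ?q (\<lambda>(y,f). (restrict y A, block A f))"
  proof (rule H_eq_of_determined)
    show "finite (set_pmf ?q)" using finite_set_pmf_iid[of P n] by simp
    have "f n = undefined" if "f \<in> set_pmf (iid P n)" for f
      using that by (auto simp: set_pmf_iid PiE_dflt_def)
    thus "\<forall>u\<in>set_pmf ?q. \<forall>v\<in>set_pmf ?q. ((\<lambda>(y,f). (restrict y A, block A f)) u
        = (\<lambda>(y,f). (restrict y A, block A f)) v) \<longleftrightarrow>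
        ((\<lambda>(y,f). block A (f(n:=y))) u = (\<lambda>(y,f). block A (f(n:=y))) v)"
      by (auto simp: block_fun_upd_eq_iff)
  qed
  also have "\<dots> = H P (\<lambda>x. restrict x A) + H (iid P n) (block A)"
    by (rule H_pair_pmf) (simp_all add: finite_set_pmf_iid)
  also have "\<dots> = real (Suc n) * H P (\<lambda>x. restrict x A)"
    unfolding Suc.IH of_nat_Suc by (simp only: algebra_simps)
  finally show ?case .
qed

lemma parts_finite: "\<P> \<in> parts \<Longrightarrow> finite (\<P> :: 'i::finite set set)"
  by (rule finite_subset[of _ UNIV]) auto

lemma parts_card_ge_2: "\<P> \<in> parts \<Longrightarrow> 2 \<le> card \<P>"
  unfolding parts_def by simp

lemma parts_cover: "\<P> \<in> parts \<Longrightarrow> \<exists>A\<in>\<P>. i \<in> A"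
  unfolding parts_def partition_on_def by blast

lemma parts_nonempty_block: "\<P> \<in> parts \<Longrightarrow> A \<in> \<P> \<Longrightarrow> A \<noteq> {}"
  unfolding parts_def partition_on_def by blast

lemma parts_nonempty:
  assumes "CARD('i::finite) \<ge> 2"
  shows "(parts :: 'i set set set) \<noteq> {}"
proof -
  obtain i :: 'i where True by simp
  have "(UNIV :: 'i set) \<noteq> {i}"
  proof
    assume u: "(UNIV :: 'i set) = {i}"
    have "card (UNIV :: 'i set) = 1" unfolding u by simp
    thus False using assms by simp
  qed
  then obtain j where "j \<noteq> i" by auto
  have "partition_on UNIV {{i}, - {i}}"
    unfolding partition_on_def disjoint_def using \<open>j \<noteq> i\<close> by auto
  moreover have "{i} \<noteq> - {i}" by auto
  hence "card {{i}, - {i}} = 2" by simp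
  ultimately have "{{i}, - {i}} \<in> parts" unfolding parts_def by simp
  thus ?thesis by blast
qed

lemma finite_minparts: "finite (minparts (P :: ('i::finite \<Rightarrow> 'a) pmf))"
  unfolding minparts_def by (rule finite_subset[of _ UNIV]) auto

lemma minparts_nonempty:
  assumes "CARD('i::finite) \<ge> 2"
  shows "minparts (P :: ('i \<Rightarrow> 'a) pmf) \<noteq> {}"
proof -
  have "finite (parts :: 'i set set set)" by (rule finite_subset[of _ UNIV]) auto
  hence "SKcap P \<in> Delta P ` parts"
    unfolding SKcap_def using parts_nonempty[OF assms] by (intro Min_in) auto
  thus ?thesis unfolding minparts_def by auto
qed

lemma sum_H_block_iid:
  fixes P :: "('i::finite \<Rightarrow> 'a::finite) pmf"
  assumes "\<P> \<in> parts"
  shows "(\<Sum>A\<in>\<P>. H (iid P n) (block A)) - H (iid P n) id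
           = real n * ((real (card \<P>) - 1) * Delta P \<P>)"
proof -
  have "(\<lambda>x. restrict x UNIV) = (id :: ('i \<Rightarrow> 'a) \<Rightarrow> _)" by (auto simp: fun_eq_iff)
  hence "H (iid P n) id = real n * H P id"
    using H_block_iid[of P n UNIV] by (simp add: block_UNIV)
  moreover have "(real (card \<P>) - 1) * Delta P \<P> = (\<Sum>A\<in>\<P>. H P (\<lambda>x. restrict x A)) - H P id"
    using parts_card_ge_2[OF assms] by (simp add: Delta_def)
  ultimately show ?thesis
    by (simp add: H_block_iid sum_distrib_left[symmetric] right_diff_distrib)
qed

lemma finite_range_transcript:
  fixes \<pi> :: "('i::finite, 'a::finite) protocol"
  shows "finite (range (transcript n \<pi>))"
proof (rule finite_subset)
  show "range (transcript n \<pi>) \<subseteq> transcript n \<pi> ` PiE_dflt {..<n} undefined (\<lambda>_. UNIV)"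
  proof
    fix y assume "y \<in> range (transcript n \<pi>)"
    then obtain x where y: "y = transcript n \<pi> x" by blast
    have "y = transcript n \<pi> (\<lambda>t. if t < n then x t else undefined)"
      unfolding y transcript_def obs_def by (simp cong: if_cong)
    moreover have "(\<lambda>t. if t < n then x t else undefined) \<in> PiE_dflt {..<n} undefined (\<lambda>_. UNIV)"
      unfolding PiE_dflt_def by auto
    ultimately show "y \<in> transcript n \<pi> ` PiE_dflt {..<n} undefined (\<lambda>_. UNIV)" by blast
  qed
  show "finite (transcript n \<pi> ` PiE_dflt {..<n} undefined (\<lambda>_. UNIV :: ('i \<Rightarrow> 'a) set))"
    by (intro finite_imageI finite_PiE_dflt) auto
qed

lemma H_transcript_le_log_range_card:
  fixes P :: "('i::finite \<Rightarrow> 'a::finite) pmf"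
  shows "H (iid P n) (transcript n \<pi>) \<le> log 2 (real (range_card n \<pi>))"
  unfolding range_card_def
  by (intro H_le_log_card finite_set_pmf_iid finite_range_transcript) auto

section \<open>Interactive communication and the converse bound\<close>

text \<open>A transmission is a function of its sender's observations and the history, so it adds no
  entropy given the block containing the sender, and at most its conditional entropy given the
  history for each of the other \<open>|\<P>| - 1\<close> blocks.\<close>

lemma sum_H_transmission_le:
  fixes Y :: "'s \<Rightarrow> 'i \<Rightarrow> nat \<Rightarrow> 'a" and Z :: "'i set \<Rightarrow> 's \<Rightarrow> 'z"
    and h :: "'s \<Rightarrow> nat list" and g :: "(nat \<Rightarrow> 'a) \<Rightarrow> nat list \<Rightarrow> nat"
  assumes fin: "finite (set_pmf p)" and "finite \<P>" and "A0 \<in> \<P>" "i \<in> A0"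
    and det: "\<And>x y. Z A0 x = Z A0 y \<Longrightarrow> Y x i = Y y i"
  defines "h' \<equiv> \<lambda>x. h x @ [g (Y x i) (h x)]"
  shows "(\<Sum>A\<in>\<P>. H p (\<lambda>x. (Z A x, h' x)) - H p (\<lambda>x. (Z A x, h x)))
         \<le> (real (card \<P>) - 1) * (H p h' - H p h)"
proof -
  have sender: "H p (\<lambda>x. (Z A0 x, h' x)) = H p (\<lambda>x. (Z A0 x, h x))"
  proof (rule H_eq_of_determined[OF fin], intro ballI)
    fix x y
    show "((Z A0 x, h x) = (Z A0 y, h y)) = ((Z A0 x, h' x) = (Z A0 y, h' y))"
      using det[of x y] unfolding h'_def by auto
  qed
  have other: "H p (\<lambda>x. (Z A x, h' x)) - H p (\<lambda>x. (Z A x, h x)) \<le> H p h' - H p h" for A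
  proof -
    have "H p (\<lambda>x. (Z A x, h x, g (Y x i) (h x))) + H p h
          \<le> H p (\<lambda>x. (Z A x, h x)) + H p (\<lambda>x. (h x, g (Y x i) (h x)))"
      by (rule H_submodular[OF fin])
    moreover have "H p (\<lambda>x. (Z A x, h x, g (Y x i) (h x))) = H p (\<lambda>x. (Z A x, h' x))"
      "H p (\<lambda>x. (h x, g (Y x i) (h x))) = H p h'"
      by (rule H_eq_of_determined[OF fin]; auto simp: h'_def)+
    ultimately show ?thesis by simp
  qed
  have "card \<P> \<noteq> 0" using \<open>A0 \<in> \<P>\<close> \<open>finite \<P>\<close> by auto
  hence "1 \<le> card \<P>" by linarith
  have "(\<Sum>A\<in>\<P>. H p (\<lambda>x. (Z A x, h' x)) - H p (\<lambda>x. (Z A x, h x)))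
      = (\<Sum>A\<in>\<P> - {A0}. H p (\<lambda>x. (Z A x, h' x)) - H p (\<lambda>x. (Z A x, h x)))"
    using \<open>A0 \<in> \<P>\<close> \<open>finite \<P>\<close> by (simp add: sum.remove sender)
  also have "\<dots> \<le> (\<Sum>A\<in>\<P> - {A0}. H p h' - H p h)"
    by (intro sum_mono other)
  also have "\<dots> = (real (card \<P>) - 1) * (H p h' - H p h)"
    using \<open>A0 \<in> \<P>\<close> \<open>finite \<P>\<close> \<open>1 \<le> card \<P>\<close> by (simp add: card_Diff_singleton)
  finally show ?thesis .
qed

lemma sum_H_run_le:
  fixes Y :: "'s \<Rightarrow> 'i \<Rightarrow> nat \<Rightarrow> 'a" and Z :: "'i set \<Rightarrow> 's \<Rightarrow> 'z"
  assumes fin: "finite (set_pmf p)" and "finite \<P>"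
    and cover: "\<And>i. \<exists>A\<in>\<P>. i \<in> A"
    and det: "\<And>i A x y. A \<in> \<P> \<Longrightarrow> i \<in> A \<Longrightarrow> Z A x = Z A y \<Longrightarrow> Y x i = Y y i"
  shows "(\<Sum>A\<in>\<P>. H p (\<lambda>x. (Z A x, run \<pi> (Y x) (h x))) - H p (\<lambda>x. (Z A x, h x)))
         \<le> (real (card \<P>) - 1) * (H p (\<lambda>x. run \<pi> (Y x) (h x)) - H p h)"
proof (induction \<pi> arbitrary: h)
  case Nil
  show ?case by simp
next
  case (Cons c \<pi>)
  obtain i g where c: "c = (i, g)" by (cases c)
  define h' where "h' = (\<lambda>x. h x @ [g (Y x i) (h x)])"
  have run: "run (c # \<pi>) (Y x) (h x) = run \<pi> (Y x) (h' x)" for x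
    unfolding c h'_def by simp
  obtain A0 where A0: "A0 \<in> \<P>" "i \<in> A0" using cover by blast
  have step: "(\<Sum>A\<in>\<P>. H p (\<lambda>x. (Z A x, h' x)) - H p (\<lambda>x. (Z A x, h x)))
      \<le> (real (card \<P>) - 1) * (H p h' - H p h)"
    unfolding h'_def using det[OF A0] by (rule sum_H_transmission_le[OF fin \<open>finite \<P>\<close> A0])
  have "(\<Sum>A\<in>\<P>. H p (\<lambda>x. (Z A x, run (c # \<pi>) (Y x) (h x))) - H p (\<lambda>x. (Z A x, h x)))
      = (\<Sum>A\<in>\<P>. H p (\<lambda>x. (Z A x, run \<pi> (Y x) (h' x))) - H p (\<lambda>x. (Z A x, h' x)))
        + (\<Sum>A\<in>\<P>. H p (\<lambda>x. (Z A x, h' x)) - H p (\<lambda>x. (Z A x, h x)))"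
    unfolding run sum.distrib[symmetric] by (intro sum.cong) auto
  also have "\<dots> \<le> (real (card \<P>) - 1) * (H p (\<lambda>x. run \<pi> (Y x) (h' x)) - H p h')
                 + (real (card \<P>) - 1) * (H p h' - H p h)"
    by (intro add_mono Cons.IH step)
  also have "\<dots> = (real (card \<P>) - 1) * (H p (\<lambda>x. run (c # \<pi>) (Y x) (h x)) - H p h)"
    unfolding run by (simp add: algebra_simps)
  finally show ?case .
qed

lemma sum_H_block_transcript_le:
  fixes p :: "(nat \<Rightarrow> 'i::finite \<Rightarrow> 'a) pmf"
  assumes fin: "finite (set_pmf p)" and "\<P> \<in> parts"
  shows "(\<Sum>A\<in>\<P>. H p (\<lambda>x. (block A x, transcript n \<pi> x)) - H p (block A))
         \<le> (real (card \<P>) - 1) * H p (transcript n \<pi>)"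
proof -
  have "(\<Sum>A\<in>\<P>. H p (\<lambda>x. (block A x, run \<pi> (\<lambda>i. obs n i x) []))
                 - H p (\<lambda>x. (block A x, ([] :: nat list))))
        \<le> (real (card \<P>) - 1) * (H p (\<lambda>x. run \<pi> (\<lambda>i. obs n i x) []) - H p (\<lambda>_. ([] :: nat list)))"
  proof (rule sum_H_run_le[OF fin parts_finite[OF \<open>\<P> \<in> parts\<close>] parts_cover[OF \<open>\<P> \<in> parts\<close>]])
    fix i A and x y :: "nat \<Rightarrow> 'i \<Rightarrow> 'a"
    assume "i \<in> A" and eq: "block A x = block A y"
    have "x t i = y t i" for t
      using fun_cong[OF fun_cong[OF eq, of t], of i] \<open>i \<in> A\<close> by (simp add: block_def)
    thus "obs n i x = obs n i y" by (simp add: obs_def fun_eq_iff)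
  qed
  moreover have "H p (\<lambda>x. (block A x, ([] :: nat list))) = H p (block A)" for A
    by (rule H_eq_of_determined[OF fin]) auto
  ultimately show ?thesis unfolding transcript_def by (simp add: H_const)
qed

lemma condH_decoded_given_block_le:
  fixes P :: "('i::finite \<Rightarrow> 'a::finite) pmf" and J :: "(nat \<Rightarrow> 'i \<Rightarrow> 'a) \<Rightarrow> 'j"
  assumes "i \<in> A"
    and decode: "measure (iid P n) {x. \<forall>i. Js i (obs n i x) (transcript n \<pi> x) = J x} \<ge> 1 - \<epsilon>"
  shows "condH (iid P n) J (\<lambda>x. (block A x, transcript n \<pi> x))
           \<le> 2 + \<epsilon> * log 2 (2 * real (CARD('i \<Rightarrow> 'a) ^ n))"
proof (rule fano)
  let ?guess = "\<lambda>(z, f). Js i (\<lambda>t. if t < n then z t i else undefined) f"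
  have guess: "?guess (block A x, transcript n \<pi> x) = Js i (obs n i x) (transcript n \<pi> x)" for x
    using \<open>i \<in> A\<close> by (simp add: block_def obs_def cong: if_cong)
  have "measure (iid P n) {x. J x \<noteq> ?guess (block A x, transcript n \<pi> x)}
        \<le> measure (iid P n) (UNIV - {x. \<forall>i. Js i (obs n i x) (transcript n \<pi> x) = J x})"
    unfolding guess by (intro measure_pmf.finite_measure_mono) auto
  also have "\<dots> \<le> \<epsilon>"
    using decode measure_pmf.prob_compl[of "{x. \<forall>i. Js i (obs n i x) (transcript n \<pi> x) = J x}"]
    by simp
  finally show "measure (iid P n) {x. J x \<noteq> ?guess (block A x, transcript n \<pi> x)} \<le> \<epsilon>" .
  have "card (J ` set_pmf (iid P n)) \<le> card (set_pmf (iid P n))"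
    by (rule card_image_le[OF finite_set_pmf_iid])
  thus "card (J ` set_pmf (iid P n)) \<le> CARD('i \<Rightarrow> 'a) ^ n"
    using card_set_pmf_iid_le[of P n] by linarith
  show "1 \<le> CARD('i \<Rightarrow> 'a) ^ n" by (simp add: Suc_leI)
qed (rule finite_set_pmf_iid)

definition Delta_cond :: "('i \<Rightarrow> 'a) pmf \<Rightarrow> nat \<Rightarrow> ((nat \<Rightarrow> 'i \<Rightarrow> 'a) \<Rightarrow> 'l) \<Rightarrow> 'i set set \<Rightarrow> real" where
  "Delta_cond P n L \<P> =
     ((\<Sum>A\<in>\<P>. condH (iid P n) (block A) L) - condH (iid P n) id L) / (real (card \<P>) - 1)"

lemma condI_eq_Max_Delta_cond: "condI P n L = Max (Delta_cond P n L ` minparts P)"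
  unfolding condI_def Delta_cond_def block_def ..

lemma Delta_cond_nonneg:
  fixes P :: "('i::finite \<Rightarrow> 'a::finite) pmf"
  assumes "\<P> \<in> parts"
  shows "0 \<le> Delta_cond P n L \<P>"
proof -
  have "condH (iid P n) id L \<le> (\<Sum>A\<in>\<P>. condH (iid P n) (block A) L)"
  proof (rule condH_subadditive[OF finite_set_pmf_iid parts_finite[OF assms]], intro ballI impI)
    fix x y :: "nat \<Rightarrow> 'i \<Rightarrow> 'a" assume blocks: "\<forall>A\<in>\<P>. block A x = block A y"
    have "x t i = y t i" for t i
    proof -
      obtain A where "A \<in> \<P>" "i \<in> A" using parts_cover[OF assms] by blast
      hence "block A x = block A y" using blocks by blast
      from fun_cong[OF fun_cong[OF this, of t], of i] show ?thesis
        using \<open>i \<in> A\<close> by (simp add: block_def)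
    qed
    thus "id x = id y" by (simp add: fun_eq_iff)
  qed
  thus ?thesis using parts_card_ge_2[OF assms] unfolding Delta_cond_def by simp
qed

lemma condI_nonneg:
  fixes P :: "('i::finite \<Rightarrow> 'a::finite) pmf"
  assumes "CARD('i) \<ge> 2"
  shows "0 \<le> condI P n L"
proof -
  obtain \<P> where \<P>: "\<P> \<in> minparts P" using minparts_nonempty[OF assms] by blast
  hence "0 \<le> Delta_cond P n L \<P>" unfolding minparts_def by (simp add: Delta_cond_nonneg)
  also have "\<dots> \<le> condI P n L"
    unfolding condI_eq_Max_Delta_cond using finite_minparts \<P> by (intro Max_ge) auto
  finally show ?thesis .
qed

lemma condI_le_of_Delta_cond_le:
  assumes "CARD('i::finite) \<ge> 2" and "\<And>\<P>. \<P> \<in> minparts P \<Longrightarrow> Delta_cond P n L \<P> \<le> b"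
  shows "condI (P :: ('i \<Rightarrow> 'a) pmf) n L \<le> b"
  unfolding condI_eq_Max_Delta_cond
  using finite_minparts[of P] minparts_nonempty[OF assms(1), of P] assms(2)
  by (subst Max_le_iff) auto

text \<open>The blocks of the i.i.d. source have the multi-information \<open>n (|\<P>| - 1) \<Delta>(\<P>)\<close>, the
  communication adds at most \<open>(|\<P>| - 1) H(F)\<close> to it, and each block recovers \<open>J\<close> from
  \<open>(X\<^sup>n\<^sub>A, F)\<close> up to the slack \<open>\<delta>\<close>.\<close>

lemma sum_condH_blocks_le:
  fixes P :: "('i::finite \<Rightarrow> 'a::finite) pmf" and J :: "(nat \<Rightarrow> 'i \<Rightarrow> 'a) \<Rightarrow> 'j"
  assumes "\<P> \<in> parts"
    and slack: "\<And>A. A \<in> \<P> \<Longrightarrow> condH (iid P n) J (\<lambda>x. (block A x, transcript n \<pi> x)) \<le> \<delta>"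
  defines "L \<equiv> \<lambda>x. (J x, transcript n \<pi> x)"
  shows "(\<Sum>A\<in>\<P>. condH (iid P n) (block A) L) - condH (iid P n) id L
         \<le> (real (card \<P>) - 1) * (real n * Delta P \<P> + H (iid P n) (transcript n \<pi>) - H (iid P n) L)
           + real (card \<P>) * \<delta>"
proof -
  define p where "p = iid P n"
  define F where "F = transcript n \<pi>"
  define k where "k = real (card \<P>)"
  have fin: "finite (set_pmf p)" unfolding p_def by (rule finite_set_pmf_iid)
  have per_block: "condH p (block A) L \<le> H p (\<lambda>x. (block A x, F x)) + \<delta> - H p L" if "A \<in> \<P>" for A
  proof -
    have "H p (\<lambda>x. (block A x, L x)) = H p (\<lambda>x. (J x, block A x, F x))"
      by (rule H_eq_of_determined[OF fin]) (auto simp: L_def F_def)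
    thus ?thesis using slack[OF that] unfolding condH_def p_def F_def by simp
  qed
  have "H p (\<lambda>x. (id x, L x)) = H p id"
    by (rule H_eq_of_determined[OF fin]) (auto simp: L_def)
  hence "(\<Sum>A\<in>\<P>. condH p (block A) L) - condH p id L
      \<le> (\<Sum>A\<in>\<P>. H p (\<lambda>x. (block A x, F x)) + \<delta> - H p L) - (H p id - H p L)"
    unfolding condH_def[of p id] using per_block by (intro diff_mono sum_mono) auto
  also have "\<dots> = (\<Sum>A\<in>\<P>. H p (\<lambda>x. (block A x, F x)) - H p (block A))
                  + ((\<Sum>A\<in>\<P>. H p (block A)) - H p id) + k * \<delta> - (k - 1) * H p L"
    unfolding k_def by (simp add: sum.distrib sum_subtractf algebra_simps)
  also have "\<dots> \<le> (k - 1) * H p F + real n * ((k - 1) * Delta P \<P>) + k * \<delta> - (k - 1) * H p L"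
    using sum_H_block_transcript_le[OF fin \<open>\<P> \<in> parts\<close>, of n \<pi>]
      sum_H_block_iid[OF \<open>\<P> \<in> parts\<close>, of P n]
    unfolding p_def F_def k_def by linarith
  finally show ?thesis unfolding p_def F_def k_def by (simp add: algebra_simps)
qed

lemma Delta_cond_le:
  fixes P :: "('i::finite \<Rightarrow> 'a::finite) pmf" and J :: "(nat \<Rightarrow> 'i \<Rightarrow> 'a) \<Rightarrow> 'j"
  assumes "\<P> \<in> minparts P"
    and decode: "measure (iid P n) {x. \<forall>i. Js i (obs n i x) (transcript n \<pi> x) = J x} \<ge> 1 - \<epsilon>"
    and "0 \<le> \<epsilon>"
  shows "Delta_cond P n (\<lambda>x. (J x, transcript n \<pi> x)) \<P>
         \<le> real n * SKcap P + H (iid P n) (transcript n \<pi>) - H (iid P n) (\<lambda>x. (J x, transcript n \<pi> x))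
           + 2 * (2 + \<epsilon> * log 2 (2 * real (CARD('i \<Rightarrow> 'a) ^ n)))"
proof -
  define \<delta> where "\<delta> = 2 + \<epsilon> * log 2 (2 * real (CARD('i \<Rightarrow> 'a) ^ n))"
  define X where
    "X = real n * SKcap P + H (iid P n) (transcript n \<pi>) - H (iid P n) (\<lambda>x. (J x, transcript n \<pi> x))"
  define k where "k = real (card \<P>)"
  have parts: "\<P> \<in> parts" and D: "Delta P \<P> = SKcap P"
    using \<open>\<P> \<in> minparts P\<close> unfolding minparts_def by auto
  have k2: "2 \<le> k" unfolding k_def using parts_card_ge_2[OF parts] by simp
  have "1 \<le> real (CARD('i \<Rightarrow> 'a) ^ n)" by (simp add: Suc_leI)
  hence "1 \<le> 2 * real (CARD('i \<Rightarrow> 'a) ^ n)" by linarith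
  hence "0 \<le> log 2 (2 * real (CARD('i \<Rightarrow> 'a) ^ n))" by simp
  hence \<delta>0: "0 \<le> \<delta>" unfolding \<delta>_def using \<open>0 \<le> \<epsilon>\<close> by simp
  have slack: "condH (iid P n) J (\<lambda>x. (block A x, transcript n \<pi> x)) \<le> \<delta>" if A: "A \<in> \<P>" for A
  proof -
    obtain i where "i \<in> A" using parts_nonempty_block[OF parts A] by blast
    thus ?thesis unfolding \<delta>_def by (rule condH_decoded_given_block_le[OF _ decode])
  qed
  have "Delta_cond P n (\<lambda>x. (J x, transcript n \<pi> x)) \<P> \<le> ((k - 1) * X + k * \<delta>) / (k - 1)"
    unfolding Delta_cond_def X_def k_def D[symmetric]
    using sum_condH_blocks_le[OF parts slack] k2 unfolding k_def by (intro divide_right_mono) auto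
  also have "\<dots> = X + k / (k - 1) * \<delta>" using k2 by (simp add: field_simps)
  also have "k / (k - 1) * \<delta> \<le> 2 * \<delta>"
    using k2 \<delta>0 by (intro mult_right_mono) (simp_all add: divide_simps)
  finally show ?thesis unfolding X_def \<delta>_def by simp
qed

lemma fano_slack_negligible:
  fixes C :: nat
  assumes "1 \<le> C" "0 < e"
  obtains \<epsilon> where "0 < \<epsilon>" "\<epsilon> < 1"
    "\<forall>\<^sub>F n in sequentially. 2 * (2 + \<epsilon> * log 2 (2 * real (C ^ n))) \<le> real n * e"
proof
  define LC where "LC = log 2 (real C)"
  have LC: "0 \<le> LC" unfolding LC_def using assms(1) by simp
  define \<epsilon> where "\<epsilon> = min (1/2) (e / (8 * (1 + LC)))"
  show "0 < \<epsilon>" "\<epsilon> < 1" unfolding \<epsilon>_def using assms(2) LC by simp_all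
  have \<epsilon>LC: "\<epsilon> * (1 + LC) \<le> e / 8"
  proof -
    have "\<epsilon> * (1 + LC) \<le> e / (8 * (1 + LC)) * (1 + LC)"
      unfolding \<epsilon>_def using LC by (intro mult_right_mono) auto
    also have "\<dots> = e / 8" using LC by (simp add: field_simps)
    finally show ?thesis .
  qed
  show "\<forall>\<^sub>F n in sequentially. 2 * (2 + \<epsilon> * log 2 (2 * real (C ^ n))) \<le> real n * e"
    using eventually_ge_at_top[of "nat \<lceil>8 / e\<rceil> + 1"]
  proof eventually_elim
    case (elim n)
    have "8 / e \<le> real n" using elim by linarith
    hence four: "4 \<le> real n * e / 2" using assms(2) by (simp add: field_simps)
    have "log 2 (2 * real (C ^ n)) = 1 + real n * LC"
      unfolding LC_def using assms(1) by (simp add: log_mult log_nat_power)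
    also have "\<dots> \<le> real n * (1 + LC)" using elim LC by (simp add: algebra_simps)
    finally have "\<epsilon> * log 2 (2 * real (C ^ n)) \<le> real n * (\<epsilon> * (1 + LC))"
      using \<open>0 < \<epsilon>\<close> by (simp add: mult_left_mono mult.left_commute)
    also have "\<dots> \<le> real n * (e / 8)" using \<epsilon>LC by (intro mult_left_mono) auto
    finally show ?case using four by simp
  qed
qed

lemma CR_Delta_cond_le_eventually:
  fixes P :: "('i::finite \<Rightarrow> 'a::finite) pmf"
  assumes CR: "is_CR P comm J" and "\<P> \<in> minparts P" "0 < e"
  shows "\<forall>\<^sub>F n in sequentially. Delta_cond P n (\<lambda>x. (J n x, transcript n (comm n) x)) \<P>
           \<le> real n * SKcap P + H (iid P n) (transcript n (comm n))
              - H (iid P n) (\<lambda>x. (J n x, transcript n (comm n) x)) + real n * e"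
proof -
  obtain \<epsilon> where \<epsilon>: "0 < \<epsilon>" "\<epsilon> < 1" and small:
    "\<forall>\<^sub>F n in sequentially. 2 * (2 + \<epsilon> * log 2 (2 * real (CARD('i \<Rightarrow> 'a) ^ n))) \<le> real n * e"
    using fano_slack_negligible[of "CARD('i \<Rightarrow> 'a)" e] \<open>0 < e\<close> by (auto simp: Suc_leI)
  have "\<forall>\<^sub>F n in sequentially. \<exists>Js :: 'i \<Rightarrow> (nat \<Rightarrow> 'a) \<Rightarrow> nat list \<Rightarrow> nat.
          measure (iid P n) {x. \<forall>i. Js i (obs n i x) (transcript n (comm n) x) = J n x} \<ge> 1 - \<epsilon>"
    using CR \<epsilon> unfolding is_CR_def by blast
  thus ?thesis using small
  proof eventually_elim
    case (elim n)
    then obtain Js :: "'i \<Rightarrow> (nat \<Rightarrow> 'a) \<Rightarrow> nat list \<Rightarrow> nat" where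
      "measure (iid P n) {x. \<forall>i. Js i (obs n i x) (transcript n (comm n) x) = J n x} \<ge> 1 - \<epsilon>"
      by blast
    from Delta_cond_le[OF \<open>\<P> \<in> minparts P\<close> this] \<epsilon>(1) elim(2) show ?case by linarith
  qed
qed

lemma CR_entropy_le:
  fixes P :: "('i::finite \<Rightarrow> 'a::finite) pmf"
  assumes "CARD('i) \<ge> 2" "is_CR P comm J" "0 < e"
  shows "\<forall>\<^sub>F n in sequentially. H (iid P n) (\<lambda>x. (J n x, transcript n (comm n) x))
           \<le> real n * SKcap P + H (iid P n) (transcript n (comm n)) + real n * e"
proof -
  obtain \<P> where \<P>: "\<P> \<in> minparts P" using minparts_nonempty[OF assms(1)] by blast
  hence "\<forall>\<^sub>F n in sequentially. 0 \<le> Delta_cond P n (\<lambda>x. (J n x, transcript n (comm n) x)) \<P>"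
    unfolding minparts_def by (simp add: Delta_cond_nonneg)
  with CR_Delta_cond_le_eventually[OF assms(2) \<P> assms(3)] show ?thesis
    by eventually_elim linarith
qed

lemma SK_condI_le_eventually:
  fixes P :: "('i::finite \<Rightarrow> 'a::finite) pmf"
  assumes card: "CARD('i) \<ge> 2" and SK: "is_SK P comm K (SKcap P)" and "0 < e"
  shows "\<forall>\<^sub>F n in sequentially. condI P n (\<lambda>x. (K n x, transcript n (comm n) x)) \<le> real n * e"
proof -
  define L where "L = (\<lambda>n x. (K n x, transcript n (comm n) x))"
  have CR: "is_CR P comm K" using SK unfolding is_SK_def by simp
  have "\<forall>\<^sub>F n in sequentially. \<forall>\<P>\<in>minparts P. Delta_cond P n (L n) \<P>
          \<le> real n * SKcap P + H (iid P n) (transcript n (comm n)) - H (iid P n) (L n) + real n * (e / 2)"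
    unfolding L_def using \<open>0 < e\<close>
    by (intro eventually_ball_finite[OF finite_minparts] ballI CR_Delta_cond_le_eventually[OF CR]) simp_all
  moreover have "\<forall>\<^sub>F n in sequentially. MI (iid P n) (K n) (transcript n (comm n)) \<le> e / 4 \<and>
      H (iid P n) (K n) / real n \<ge> SKcap P - e / 4"
    using SK \<open>0 < e\<close> unfolding is_SK_def by (meson zero_less_divide_iff zero_less_numeral)
  ultimately show ?thesis
    using eventually_ge_at_top[of 1]
  proof eventually_elim
    case (elim n)
    have "real n * SKcap P - real n * (e / 4) \<le> H (iid P n) (K n)"
      using elim(2,3) by (simp add: field_simps)
    hence "real n * SKcap P + H (iid P n) (transcript n (comm n)) - H (iid P n) (L n)
           \<le> real n * (e / 4) + e / 4"
      using elim(2) unfolding L_def MI_def by simp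
    moreover have "e / 4 \<le> real n * (e / 4)" using elim(3) \<open>0 < e\<close> by simp
    ultimately have "Delta_cond P n (L n) \<P> \<le> real n * e" if "\<P> \<in> minparts P" for \<P>
      using elim(1) that by fastforce
    from condI_le_of_Delta_cond_le[OF card this] show ?case by (simp add: L_def)
  qed
qed

lemma SK_is_CI:
  fixes P :: "('i::finite \<Rightarrow> 'a::finite) pmf"
  assumes card: "CARD('i) \<ge> 2" and SK: "is_SK P comm K (SKcap P)"
  shows "is_CI P comm K"
  unfolding is_CI_def is_CIW_def tendsto_iff
proof (intro conjI allI impI)
  show "is_CR P comm K" using SK unfolding is_SK_def by simp
  fix e :: real assume "0 < e"
  hence "\<forall>\<^sub>F n in sequentially.
      condI P n (\<lambda>x. (K n x, transcript n (comm n) x)) \<le> real n * (e / 2)"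
    by (intro SK_condI_le_eventually[OF card SK]) simp
  thus "\<forall>\<^sub>F n in sequentially.
      dist (condI P n (\<lambda>x. (K n x, transcript n (comm n) x)) / real n) 0 < e"
    using eventually_ge_at_top[of 1]
  proof eventually_elim
    case (elim n)
    let ?c = "condI P n (\<lambda>x. (K n x, transcript n (comm n) x))"
    have "0 < real n * e" using elim(2) \<open>0 < e\<close> by simp
    hence "?c < real n * e" using elim(1) by linarith
    moreover have "0 \<le> ?c" by (rule condI_nonneg[OF card])
    ultimately show ?case using elim(2) by (simp add: divide_less_eq mult.commute)
  qed
qed

lemma CR_entropy_rate_le:
  fixes P :: "('i::finite \<Rightarrow> 'a::finite) pmf"
  assumes card: "CARD('i) \<ge> 2" and CR: "is_CR P comm J"
    and rate: "\<forall>\<epsilon>>0. \<forall>\<^sub>F n in sequentially. log 2 (real (range_card n (comm n))) / real n \<le> R + \<epsilon>"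
  shows "\<forall>\<epsilon>>0. \<forall>\<^sub>F n in sequentially.
           H (iid P n) (\<lambda>x. (J n x, transcript n (comm n) x)) / real n \<le> (R + SKcap P) + \<epsilon>"
proof (intro allI impI)
  fix \<epsilon> :: real assume "0 < \<epsilon>"
  hence "\<forall>\<^sub>F n in sequentially. log 2 (real (range_card n (comm n))) / real n \<le> R + \<epsilon> / 2"
    using rate by simp
  moreover have "\<forall>\<^sub>F n in sequentially. H (iid P n) (\<lambda>x. (J n x, transcript n (comm n) x))
      \<le> real n * SKcap P + H (iid P n) (transcript n (comm n)) + real n * (\<epsilon> / 2)"
    by (rule CR_entropy_le[OF card CR]) (use \<open>0 < \<epsilon>\<close> in simp)
  ultimately show "\<forall>\<^sub>F n in sequentially.
      H (iid P n) (\<lambda>x. (J n x, transcript n (comm n) x)) / real n \<le> (R + SKcap P) + \<epsilon>"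
    using eventually_ge_at_top[of 1]
  proof eventually_elim
    case (elim n)
    have "H (iid P n) (\<lambda>x. (J n x, transcript n (comm n) x))
          \<le> real n * SKcap P + log 2 (real (range_card n (comm n))) + real n * (\<epsilon> / 2)"
      using elim(2) H_transcript_le_log_range_card[of P n "comm n"] by linarith
    also have "\<dots> \<le> real n * ((R + SKcap P) + \<epsilon>)"
      using elim(1,3) by (simp add: field_simps)
    finally show ?case using elim(3) by (simp add: field_simps)
  qed
qed

theorem theorem1:
  fixes P :: "('i::finite \<Rightarrow> 'a::finite) pmf"
  assumes "CARD('i) \<ge> 2"
  shows "R_SK P \<ge> R_CI P \<and> R_CI P \<ge> CIX P - ereal (SKcap P)"
proof
  show "R_SK P \<ge> R_CI P"
    unfolding R_SK_def R_CI_def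
    by (intro Inf_superset_mono image_mono) (use SK_is_CI[OF assms] in blast)
  show "R_CI P \<ge> CIX P - ereal (SKcap P)"
    unfolding R_CI_def
  proof (rule Inf_greatest, elim imageE CollectE conjE exE)
    fix r R comm J
    assume r: "r = ereal R" and CI: "is_CI P comm J"
      and rate: "\<forall>\<epsilon>>0. \<forall>\<^sub>F n in sequentially. log 2 (real (range_card n (comm n))) / real n \<le> R + \<epsilon>"
    have "is_CR P comm J" using CI unfolding is_CI_def by simp
    hence "CIX P \<le> ereal (R + SKcap P)"
      unfolding CIX_def using CI CR_entropy_rate_le[OF assms _ rate] by (intro Inf_lower) blast
    thus "CIX P - ereal (SKcap P) \<le> r" unfolding r by (cases "CIX P") auto
  qed
qed

end
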